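(* Let $m\ge2$ and $a_1\ge a_2\ge\cdots\ge a_m\ge1$ be integers, and set $a=\max(3,a_1)$. For $1\le i\le m$ let \[E_i=\big\{[(m-i)a]\cup\{(m-i+1)a+1,\dots,ma\}\cup\{j\} : (m-i)a+1\le j\le (m-i)a+a_i\big\},\] and let $H$ be the hypergraph on $[ma]$ with edge set $E=E_1\cup\cdots\cup E_m$. Then for $F,F'\in E$, the edge spheres $Q_F$ and $Q_{F'}$ lie in the same connected component of $\Delta_H$ if and only if $F,F'\in E_i$ for some $i$. Consequently $\Delta_H$ has exactly $m$ connected components, and for each $i$ one component is the union of the $a_i$ edge spheres $Q_F$, $F\in E_i$.
   Context: Here $[0]=\emptyset$. The coloring complex $\Delta_H$ of a hypergraph $H=([N],E)$ is the abstract simplicial complex whose vertices are the nonempty proper subsets of $[N]$ and whose faces are the chains $\emptyset\neq A_1\subsetneq\cdots\subsetneq A_l\neq[N]$ ($l\ge0$) such that, with $A_0=\emptyset$, $A_{l+1}=[N]$, some difference $A_i\setminus A_{i-1}$ contains an edge of $H$. For $F\in E$, the edge sphere $Q_F$ is the subcomplex of those faces for which some difference $A_i\setminus A_{i-1}$ contains $F$. *)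

theory Defs
  imports Main
begin

text \<open>Faces of the coloring complex are finite chains of nonempty proper subsets of [N]
  (represented as the set of their members); the differences A_i - A_{i-1} are
  taken between consecutive members of the chain extended by {} and [N].\<close>

definition is_chain_set :: "nat set set \<Rightarrow> bool" where
  "is_chain_set \<sigma> \<longleftrightarrow> (\<forall>A\<in>\<sigma>. \<forall>B\<in>\<sigma>. A \<subseteq> B \<or> B \<subseteq> A)"

text \<open>Some difference A_i - A_{i-1} of the chain (with A_0 = {}, A_(l+1) = [N]) contains F.\<close>
definition diff_contains :: "nat \<Rightarrow> nat set set \<Rightarrow> nat set \<Rightarrow> bool" where
  "diff_contains N \<sigma> F \<longleftrightarrow>
     (\<exists>B C. B \<in> insert {} \<sigma> \<and> C \<in> insert {1..N} \<sigma> \<and> B \<subset> C \<and>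
            (\<forall>D\<in>\<sigma>. \<not> (B \<subset> D \<and> D \<subset> C)) \<and> F \<subseteq> C - B)"

definition coloring_complex :: "nat \<Rightarrow> nat set set \<Rightarrow> nat set set set" where
  "coloring_complex N E =
     {\<sigma>. finite \<sigma> \<and> \<sigma> \<subseteq> {A. A \<noteq> {} \<and> A \<subset> {1..N}} \<and> is_chain_set \<sigma> \<and>
          (\<exists>F\<in>E. diff_contains N \<sigma> F)}"

definition edge_sphere :: "nat \<Rightarrow> nat set set \<Rightarrow> nat set \<Rightarrow> nat set set set" where
  "edge_sphere N E F = {\<sigma> \<in> coloring_complex N E. diff_contains N \<sigma> F}"

definition cverts :: "'v set set \<Rightarrow> 'v set" where
  "cverts K = \<Union>K"

definition cadj :: "'v set set \<Rightarrow> ('v \<times> 'v) set" where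
  "cadj K = {(v, w). \<exists>\<sigma>\<in>K. v \<in> \<sigma> \<and> w \<in> \<sigma>}"

definition components :: "'v set set \<Rightarrow> 'v set set" where
  "components K = cverts K // (cadj K)\<^sup>+"

definition same_component :: "'v set set \<Rightarrow> 'v set set \<Rightarrow> 'v set set \<Rightarrow> bool" where
  "same_component K Q Q' \<longleftrightarrow> (\<exists>C\<in>components K. cverts Q \<subseteq> C \<and> cverts Q' \<subseteq> C)"

end

theory Submission
  imports Defs
begin

(* The hypergraph H of the theorem is a "block hypergraph": [N] is split into
   blocks B_i (one per group i) of size at least 3, and every edge of group i has
   the form ([N] - B_i) + {j} with j taken from a nonempty set J_i of B_i.

   For a block hypergraph, an edge of
   group i and an edge of another group overlap and together cover [N], so no
   vertex leaves both uncut.  Hence the vertices split into the clusters T_i of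
   vertices uncut by some edge of group i; adjacency never leaves a cluster, and
   each cluster is connected through the edges of its group. *)

definition uncut :: "nat set \<Rightarrow> nat set \<Rightarrow> bool" where
  "uncut v F \<longleftrightarrow> F \<subseteq> v \<or> F \<inter> v = {}"

text \<open>Every member of a chain whose differences contain \<open>F\<close> leaves \<open>F\<close> uncut:
  it lies below or above the gap of the chain containing \<open>F\<close>.\<close>
lemma diff_contains_uncut:
  assumes chain: "is_chain_set \<sigma>" and ground: "\<forall>D\<in>\<sigma>. D \<subseteq> {1..N}"
    and dc: "diff_contains N \<sigma> F" and D: "D \<in> \<sigma>"
  shows "uncut D F"
proof -
  obtain B C where B: "B \<in> insert {} \<sigma>" and C: "C \<in> insert {1..N} \<sigma>"
    and gap: "\<forall>D\<in>\<sigma>. \<not> (B \<subset> D \<and> D \<subset> C)" and F: "F \<subseteq> C - B"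
    using dc unfolding diff_contains_def by auto
  have "D \<subseteq> B \<or> B \<subseteq> D"
    using B chain D unfolding is_chain_set_def by (cases "B = {}") auto
  moreover have "D \<subseteq> C \<or> C \<subseteq> D"
    using C chain ground D unfolding is_chain_set_def by (cases "C = {1..N}") auto
  ultimately have "D \<subseteq> B \<or> C \<subseteq> D" using gap D by auto
  then show ?thesis using F unfolding uncut_def by blast
qed

lemma diff_containsI:
  assumes "B \<in> insert {} \<sigma>" "C \<in> insert {1..N} \<sigma>" "B \<subset> C"
    "\<And>D. D \<in> \<sigma> \<Longrightarrow> \<not> (B \<subset> D \<and> D \<subset> C)" "F \<subseteq> C - B"
  shows "diff_contains N \<sigma> F"
  unfolding diff_contains_def by (intro exI[of _ B] exI[of _ C]) (use assms in auto)

lemma singleton_in_edge_sphere: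
  assumes v: "v \<noteq> {}" "v \<subset> {1..N}" and F: "F \<in> E" "F \<subseteq> {1..N}" and uncut: "uncut v F"
  shows "{v} \<in> edge_sphere N E F"
proof -
  have "diff_contains N {v} F"
  proof (cases "F \<subseteq> v")
    case True
    show ?thesis by (rule diff_containsI[of "{}" _ v]) (use True v in auto)
  next
    case False
    show ?thesis by (rule diff_containsI[of v _ "{1..N}"]) (use False uncut v F in \<open>auto simp: uncut_def\<close>)
  qed
  then show ?thesis using v F
    unfolding edge_sphere_def coloring_complex_def is_chain_set_def by auto
qed

lemma pair_in_edge_sphere:
  assumes vw: "v \<noteq> {}" "v \<subset> w" "w \<subset> {1..N}" and F: "F \<in> E" "F \<subseteq> {1..N}"
    and uncut: "uncut v F" "uncut w F"
  shows "{v, w} \<in> edge_sphere N E F"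
proof -
  have "diff_contains N {v, w} F"
  proof (cases "F \<subseteq> v")
    case True
    show ?thesis by (rule diff_containsI[of "{}" _ v]) (use True vw in auto)
  next
    case not_below_v: False
    show ?thesis
    proof (cases "F \<subseteq> w")
      case True
      show ?thesis by (rule diff_containsI[of v _ w]) (use True not_below_v uncut vw in \<open>auto simp: uncut_def\<close>)
    next
      case False
      show ?thesis
        by (rule diff_containsI[of w _ "{1..N}"]) (use False uncut vw F in \<open>auto simp: uncut_def\<close>)
    qed
  qed
  then show ?thesis using vw F
    unfolding edge_sphere_def coloring_complex_def is_chain_set_def by auto
qed

lemma cverts_edge_sphere:
  assumes F: "F \<in> E" "F \<subseteq> {1..N}"
  shows "cverts (edge_sphere N E F) = {v. v \<noteq> {} \<and> v \<subset> {1..N} \<and> uncut v F}"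
proof (intro equalityI subsetI)
  fix v assume "v \<in> cverts (edge_sphere N E F)"
  then obtain \<sigma> where \<sigma>: "\<sigma> \<in> coloring_complex N E" "diff_contains N \<sigma> F" "v \<in> \<sigma>"
    unfolding cverts_def edge_sphere_def by blast
  then have "uncut v F"
    by (intro diff_contains_uncut[of \<sigma> N]) (auto simp: coloring_complex_def)
  then show "v \<in> {v. v \<noteq> {} \<and> v \<subset> {1..N} \<and> uncut v F}"
    using \<sigma> unfolding coloring_complex_def by blast
next
  fix v assume "v \<in> {v. v \<noteq> {} \<and> v \<subset> {1..N} \<and> uncut v F}"
  then have "{v} \<in> edge_sphere N E F" using singleton_in_edge_sphere F by blast
  then show "v \<in> cverts (edge_sphere N E F)" unfolding cverts_def by blast
qed

lemma coloring_complex_eq_Union_edge_spheres: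
  "coloring_complex N E = (\<Union>F\<in>E. edge_sphere N E F)"
  unfolding coloring_complex_def edge_sphere_def by blast

lemma cverts_coloring_complex:
  assumes "\<forall>F\<in>E. F \<subseteq> {1..N}"
  shows "cverts (coloring_complex N E) = {v. v \<noteq> {} \<and> v \<subset> {1..N} \<and> (\<exists>F\<in>E. uncut v F)}"
proof -
  have "cverts (coloring_complex N E) = (\<Union>F\<in>E. cverts (edge_sphere N E F))"
    unfolding coloring_complex_eq_Union_edge_spheres[of N E] cverts_def by blast
  then show ?thesis using cverts_edge_sphere assms by auto
qed

lemma adjacent_common_uncut_edge:
  assumes "(v, w) \<in> cadj (coloring_complex N E)"
  shows "\<exists>F\<in>E. uncut v F \<and> uncut w F"
proof -
  obtain \<sigma> where \<sigma>: "\<sigma> \<in> coloring_complex N E" "v \<in> \<sigma>" "w \<in> \<sigma>"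
    using assms unfolding cadj_def by blast
  then obtain F where F: "F \<in> E" "diff_contains N \<sigma> F"
    unfolding coloring_complex_def by blast
  have "is_chain_set \<sigma>" "\<forall>D\<in>\<sigma>. D \<subseteq> {1..N}"
    using \<sigma>(1) unfolding coloring_complex_def by auto
  then show ?thesis using diff_contains_uncut F \<sigma>(2,3) by blast
qed

lemma comparable_adjacent:
  assumes "v \<noteq> {}" "v \<subseteq> w" "w \<subset> {1..N}" "F \<in> E" "F \<subseteq> {1..N}" "uncut v F" "uncut w F"
  shows "(v, w) \<in> cadj (coloring_complex N E)"
proof (cases "v = w")
  case True
  then have "{v} \<in> coloring_complex N E"
    using singleton_in_edge_sphere assms unfolding edge_sphere_def by blast
  then show ?thesis using True unfolding cadj_def by blast
next
  case False
  then have "{v, w} \<in> coloring_complex N E"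
    using pair_in_edge_sphere[of v w N F E] assms unfolding edge_sphere_def by blast
  then show ?thesis unfolding cadj_def by blast
qed

lemma no_common_uncut_of_overlapping_cover:
  assumes "F \<union> F' = {1..N}" "F \<inter> F' \<noteq> {}" "v \<noteq> {}" "v \<subset> {1..N}"
  shows "\<not> (uncut v F \<and> uncut v F')"
  using assms unfolding uncut_def by blast

lemma components_eq_partition:
  assumes cover: "cverts K = (\<Union>i\<in>I. T i)"
    and nonempty: "\<And>i. i \<in> I \<Longrightarrow> T i \<noteq> {}"
    and closed: "\<And>i v w. i \<in> I \<Longrightarrow> v \<in> T i \<Longrightarrow> (v, w) \<in> cadj K \<Longrightarrow> w \<in> T i"
    and connected: "\<And>i v w. i \<in> I \<Longrightarrow> v \<in> T i \<Longrightarrow> w \<in> T i \<Longrightarrow> (v, w) \<in> (cadj K)\<^sup>*"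
  shows "components K = T ` I"
proof -
  have class_eq: "(cadj K)\<^sup>+ `` {v} = T i" if i: "i \<in> I" and v: "v \<in> T i" for i v
  proof (intro equalityI subsetI)
    fix w assume "w \<in> (cadj K)\<^sup>+ `` {v}"
    then have "(v, w) \<in> (cadj K)\<^sup>+" by simp
    then show "w \<in> T i" by (induction rule: trancl_induct) (use closed i v in blast)+
  next
    fix w assume w: "w \<in> T i"
    have "v \<in> cverts K" using cover i v by blast
    then have "(v, v) \<in> cadj K" unfolding cverts_def cadj_def by blast
    with connected[OF i v w] have "(v, w) \<in> (cadj K)\<^sup>+" by (meson rtrancl_into_trancl2)
    then show "w \<in> (cadj K)\<^sup>+ `` {v}" by simp
  qed
  have "components K = (\<Union>v\<in>cverts K. {(cadj K)\<^sup>+ `` {v}})"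
    unfolding components_def quotient_def by simp
  also have "\<dots> = T ` I"
  proof (intro equalityI subsetI)
    fix C assume "C \<in> (\<Union>v\<in>cverts K. {(cadj K)\<^sup>+ `` {v}})"
    then obtain i v where "i \<in> I" "v \<in> T i" "C = (cadj K)\<^sup>+ `` {v}" using cover by blast
    then show "C \<in> T ` I" using class_eq by blast
  next
    fix C assume "C \<in> T ` I"
    then obtain i where i: "i \<in> I" "C = T i" by blast
    then obtain v where v: "v \<in> T i" using nonempty by blast
    then have "C = (cadj K)\<^sup>+ `` {v}" using class_eq i by simp
    then show "C \<in> (\<Union>v\<in>cverts K. {(cadj K)\<^sup>+ `` {v}})" using cover i v by blast
  qed
  finally show ?thesis .
qed

lemma third_element:
  assumes "3 \<le> card B"
  shows "\<exists>k\<in>B. k \<noteq> x \<and> k \<noteq> y"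
proof (rule ccontr)
  assume "\<not> ?thesis"
  then have "card B \<le> card {x, y}" by (intro card_mono) auto
  also have "\<dots> \<le> 2" by (simp add: card_insert_le_m1)
  finally show False using assms by simp
qed

lemma linked_sym:
  assumes "(v, w) \<in> (cadj K)\<^sup>*"
  shows "(w, v) \<in> (cadj K)\<^sup>*"
proof -
  have "sym (cadj K)" unfolding cadj_def sym_def by blast
  then show ?thesis using assms by (meson sym_rtrancl symD)
qed

locale block_hypergraph =
  fixes N :: nat and I :: "'i set" and B J :: "'i \<Rightarrow> nat set"
    and Ei :: "'i \<Rightarrow> nat set set" and E :: "nat set set"
  assumes block_ground: "\<And>i. i \<in> I \<Longrightarrow> B i \<subseteq> {1..N}"
    and block_card: "\<And>i. i \<in> I \<Longrightarrow> 3 \<le> card (B i)"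
    and blocks_disjoint: "\<And>i i'. i \<in> I \<Longrightarrow> i' \<in> I \<Longrightarrow> i \<noteq> i' \<Longrightarrow> B i \<inter> B i' = {}"
    and J_block: "\<And>i. i \<in> I \<Longrightarrow> J i \<subseteq> B i"
    and J_nonempty: "\<And>i. i \<in> I \<Longrightarrow> J i \<noteq> {}"
    and Ei_eq: "\<And>i. i \<in> I \<Longrightarrow> Ei i = (\<lambda>j. insert j ({1..N} - B i)) ` J i"
    and E_eq: "E = (\<Union>i\<in>I. Ei i)"
begin

abbreviation K :: "nat set set set" where
  "K \<equiv> coloring_complex N E"

abbreviation linked :: "nat set \<Rightarrow> nat set \<Rightarrow> bool" where
  "linked v w \<equiv> (v, w) \<in> (cadj K)\<^sup>*"

abbreviation edge :: "'i \<Rightarrow> nat \<Rightarrow> nat set" where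
  "edge i j \<equiv> insert j ({1..N} - B i)"

lemma edge_in_E: "i \<in> I \<Longrightarrow> j \<in> J i \<Longrightarrow> edge i j \<in> E"
  using Ei_eq E_eq by blast

lemma E_ground: "F \<in> E \<Longrightarrow> F \<subseteq> {1..N}"
  using E_eq Ei_eq J_block block_ground by fastforce

text \<open>Every edge misses an element of its block, so it is a proper subset of \<open>[N]\<close>.\<close>
lemma edge_proper:
  assumes i: "i \<in> I" and j: "j \<in> J i"
  shows "edge i j \<subset> {1..N}"
proof -
  obtain k where "k \<in> B i" "k \<noteq> j" using third_element[OF block_card[OF i]] by blast
  then show ?thesis using E_ground[OF edge_in_E[OF i j]] block_ground[OF i] by blast
qed

lemma edges_of_distinct_groups:
  assumes i: "i \<in> I" "i' \<in> I" "i \<noteq> i'" and j: "j \<in> J i" "j' \<in> J i'"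
  shows "edge i j \<union> edge i' j' = {1..N}" "edge i j \<inter> edge i' j' \<noteq> {}"
proof -
  have disj: "B i \<inter> B i' = {}" using blocks_disjoint[OF i] .
  show "edge i j \<union> edge i' j' = {1..N}"
    using disj J_block[OF i(1)] J_block[OF i(2)] j block_ground[OF i(1)] block_ground[OF i(2)]
    by blast
  have "j \<in> edge i' j'" using disj J_block[OF i(1)] j(1) block_ground[OF i(1)] by blast
  then show "edge i j \<inter> edge i' j' \<noteq> {}" by blast
qed

definition cluster :: "'i \<Rightarrow> nat set set" where
  "cluster i = {v. v \<noteq> {} \<and> v \<subset> {1..N} \<and> (\<exists>j\<in>J i. uncut v (edge i j))}"

lemma edge_in_cluster:
  assumes "i \<in> I" "j \<in> J i"
  shows "edge i j \<in> cluster i"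
  using edge_proper[OF assms] assms(2) unfolding cluster_def by (auto simp: uncut_def)

lemma cluster_unique:
  assumes "i \<in> I" "i' \<in> I" "v \<in> cluster i" "v \<in> cluster i'"
  shows "i = i'"
proof (rule ccontr)
  assume "i \<noteq> i'"
  obtain j j' where j: "j \<in> J i" "j' \<in> J i'"
    and uncut: "uncut v (edge i j)" "uncut v (edge i' j')" and v: "v \<noteq> {}" "v \<subset> {1..N}"
    using assms(3,4) unfolding cluster_def by auto
  have "\<not> (uncut v (edge i j) \<and> uncut v (edge i' j'))"
    using no_common_uncut_of_overlapping_cover edges_of_distinct_groups[OF assms(1,2) \<open>i \<noteq> i'\<close> j] v
    by blast
  then show False using uncut by simp
qed

lemma cverts_K: "cverts K = (\<Union>i\<in>I. cluster i)"
proof -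
  have "(\<exists>F\<in>E. uncut v F) \<longleftrightarrow> (\<exists>i\<in>I. \<exists>j\<in>J i. uncut v (edge i j))" for v
    unfolding E_eq using Ei_eq by auto
  then show ?thesis
    using cverts_coloring_complex[of E N] E_ground unfolding cluster_def by auto
qed

lemma cluster_eq_edge_spheres:
  assumes i: "i \<in> I"
  shows "(\<Union>F\<in>Ei i. cverts (edge_sphere N E F)) = cluster i"
proof -
  have "F \<in> E" "F \<subseteq> {1..N}" if "F \<in> Ei i" for F
    using that i E_eq E_ground by blast+
  then show ?thesis using cverts_edge_sphere unfolding cluster_def Ei_eq[OF i] by auto
qed

text \<open>Adjacency does not leave a cluster: adjacent vertices leave a common edge uncut,
  and that edge determines the cluster of both.\<close>
lemma cluster_closed:
  assumes i: "i \<in> I" and v: "v \<in> cluster i" and vw: "(v, w) \<in> cadj K"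
  shows "w \<in> cluster i"
proof -
  obtain F where "F \<in> E" "uncut v F" "uncut w F"
    using adjacent_common_uncut_edge[OF vw] by blast
  then obtain i' j' where i': "i' \<in> I" "j' \<in> J i'" "uncut v (edge i' j')" "uncut w (edge i' j')"
    using E_eq Ei_eq by auto
  have "v \<in> cverts K" "w \<in> cverts K" using vw unfolding cadj_def cverts_def by blast+
  then have "v \<in> cluster i'" "w \<in> cluster i'"
    using i' cverts_K unfolding cluster_def by blast+
  with cluster_unique[OF i i'(1) v] show ?thesis by simp
qed

lemma edge_adjacent_superset:
  assumes i: "i \<in> I" and j: "j \<in> J i" and w: "edge i j \<subseteq> w" "w \<subset> {1..N}"
  shows "(edge i j, w) \<in> cadj K"
  using comparable_adjacent[OF _ w edge_in_E[OF i j] E_ground[OF edge_in_E[OF i j]]] w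
  unfolding uncut_def by blast

text \<open>Two edges of the same group are linked through their union, which is proper
  because the block has a third point.\<close>
lemma edges_of_group_linked:
  assumes i: "i \<in> I" and j: "j \<in> J i" "j0 \<in> J i"
  shows "linked (edge i j) (edge i j0)"
proof -
  obtain k where k: "k \<in> B i" "k \<noteq> j" "k \<noteq> j0" using third_element[OF block_card[OF i]] by blast
  define W where "W = insert j0 (edge i j)"
  have W: "W \<subset> {1..N}"
    using k J_block[OF i] j block_ground[OF i] unfolding W_def by blast
  have "(edge i j, W) \<in> cadj K" "(edge i j0, W) \<in> cadj K"
    using edge_adjacent_superset[OF i _ _ W] j unfolding W_def by blast+
  then show ?thesis using linked_sym by (meson r_into_rtrancl rtrancl_trans)
qed

text \<open>A vertex inside the block, disjoint from the edge through \<open>j\<close> and missing some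
  other point \<open>k\<close> of the block, is linked to that edge through its union with it.\<close>
lemma block_vertex_linked:
  assumes i: "i \<in> I" and j: "j \<in> J i" and v: "v \<noteq> {}" "v \<subseteq> B i - {j}"
    and k: "k \<in> B i - {j}" "k \<notin> v"
  shows "linked v (edge i j)"
proof -
  define W where "W = v \<union> edge i j"
  have W: "W \<subset> {1..N}"
    using k v J_block[OF i] j block_ground[OF i] unfolding W_def by blast
  have "(v, W) \<in> cadj K"
    using comparable_adjacent[OF v(1) _ W edge_in_E[OF i j] E_ground[OF edge_in_E[OF i j]]] v
    unfolding W_def uncut_def by blast
  moreover have "(edge i j, W) \<in> cadj K"
    using edge_adjacent_superset[OF i j _ W] unfolding W_def by blast
  ultimately show ?thesis using linked_sym by (meson r_into_rtrancl rtrancl_trans)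
qed

text \<open>Every vertex disjoint from an edge of group \<open>i\<close> is linked to it; the block
  minus \<open>j\<close> itself is reached through one of its singletons.\<close>
lemma disjoint_vertex_linked:
  assumes i: "i \<in> I" and j: "j \<in> J i" and v: "v \<noteq> {}" "v \<subset> {1..N}" "v \<inter> edge i j = {}"
  shows "linked v (edge i j)"
proof -
  have v_block: "v \<subseteq> B i - {j}" using v by blast
  show ?thesis
  proof (cases "v = B i - {j}")
    case False
    then obtain k where "k \<in> B i - {j}" "k \<notin> v" using v_block by blast
    then show ?thesis using block_vertex_linked[OF i j v(1) v_block] by blast
  next
    case True
    obtain k where "k \<in> B i" "k \<noteq> j" using third_element[OF block_card[OF i]] by blast
    moreover obtain k' where "k' \<in> B i" "k' \<noteq> j" "k' \<noteq> k"
      using third_element[OF block_card[OF i]] by blast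
    ultimately have k: "k \<in> v" "k' \<in> v" "k \<noteq> k'" using True by auto
    have "linked {k} (edge i j)"
      using block_vertex_linked[OF i j, of "{k}" k'] k v_block by blast
    moreover have "({k}, v) \<in> cadj K"
      using comparable_adjacent[of "{k}" v N "edge i j" E] k v edge_in_E[OF i j]
        E_ground[OF edge_in_E[OF i j]]
      unfolding uncut_def by blast
    ultimately show ?thesis using linked_sym by (meson r_into_rtrancl rtrancl_trans)
  qed
qed

lemma cluster_linked_to_edge:
  assumes i: "i \<in> I" and j0: "j0 \<in> J i" and v: "v \<in> cluster i"
  shows "linked v (edge i j0)"
proof -
  obtain j where j: "j \<in> J i" "uncut v (edge i j)" and vv: "v \<noteq> {}" "v \<subset> {1..N}"
    using v unfolding cluster_def by auto
  have "linked v (edge i j)"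
  proof (cases "edge i j \<subseteq> v")
    case True
    show ?thesis by (rule linked_sym[OF r_into_rtrancl[OF edge_adjacent_superset[OF i j(1) True vv(2)]]])
  next
    case False
    then have "v \<inter> edge i j = {}" using j(2) unfolding uncut_def by auto
    then show ?thesis using disjoint_vertex_linked[OF i j(1) vv] by simp
  qed
  then show ?thesis using edges_of_group_linked[OF i j(1) j0] by (rule rtrancl_trans)
qed

lemma cluster_connected:
  assumes "i \<in> I" "v \<in> cluster i" "w \<in> cluster i"
  shows "linked v w"
proof -
  obtain j where j: "j \<in> J i" using J_nonempty[OF assms(1)] by blast
  have "linked v (edge i j)" "linked w (edge i j)"
    using cluster_linked_to_edge[OF assms(1) j] assms(2,3) by auto
  then show ?thesis using linked_sym rtrancl_trans by metis
qed

theorem components_K: "components K = cluster ` I"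
proof (rule components_eq_partition[OF cverts_K])
  fix i assume i: "i \<in> I"
  obtain j where "j \<in> J i" using J_nonempty[OF i] by blast
  then show "cluster i \<noteq> {}" using edge_in_cluster[OF i] by blast
  show "w \<in> cluster i" if "v \<in> cluster i" "(v, w) \<in> cadj K" for v w
    using cluster_closed[OF i that] .
  show "linked v w" if "v \<in> cluster i" "w \<in> cluster i" for v w
    using cluster_connected[OF i that] .
qed

text \<open>Distinct groups give distinct components, as each cluster contains an edge of its group.\<close>
lemma card_components: "card (components K) = card I"
proof -
  have "inj_on cluster I"
  proof (rule inj_onI)
    fix i i' assume "i \<in> I" "i' \<in> I" "cluster i = cluster i'"
    moreover obtain j where "j \<in> J i" using J_nonempty[OF \<open>i \<in> I\<close>] by blast
    ultimately show "i = i'" using cluster_unique edge_in_cluster by metis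
  qed
  then show ?thesis by (simp add: components_K card_image)
qed

lemma card_Ei:
  assumes i: "i \<in> I"
  shows "card (Ei i) = card (J i)"
proof -
  have "inj_on (\<lambda>j. edge i j) (J i)"
    using J_block[OF i] by (intro inj_onI) blast
  then show ?thesis by (simp add: Ei_eq[OF i] card_image)
qed

lemma edge_in_own_sphere:
  assumes "i \<in> I" "j \<in> J i"
  shows "edge i j \<in> cverts (edge_sphere N E (edge i j))"
  using cverts_edge_sphere[OF edge_in_E[OF assms] E_ground[OF edge_in_E[OF assms]]]
    edge_proper[OF assms]
  by (auto simp: uncut_def)

lemma same_component_iff:
  assumes F: "F \<in> E" and F': "F' \<in> E"
  shows "same_component K (edge_sphere N E F) (edge_sphere N E F') \<longleftrightarrow>
         (\<exists>i\<in>I. F \<in> Ei i \<and> F' \<in> Ei i)"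
proof
  assume "same_component K (edge_sphere N E F) (edge_sphere N E F')"
  then obtain i0 where i0: "i0 \<in> I" and spheres: "cverts (edge_sphere N E F) \<subseteq> cluster i0"
    "cverts (edge_sphere N E F') \<subseteq> cluster i0"
    unfolding same_component_def components_K by blast
  have group: "G \<in> Ei i0" if "G \<in> E" "cverts (edge_sphere N E G) \<subseteq> cluster i0" for G
  proof -
    obtain i j where i: "i \<in> I" "j \<in> J i" and G: "G = edge i j"
      using \<open>G \<in> E\<close> E_eq Ei_eq by auto
    have "G \<in> cluster i0" using edge_in_own_sphere[OF i] that(2) G by blast
    then have "i = i0" using cluster_unique[OF i(1) i0] edge_in_cluster[OF i] G by blast
    then show ?thesis using Ei_eq[OF i(1)] i(2) G by blast
  qed
  show "\<exists>i\<in>I. F \<in> Ei i \<and> F' \<in> Ei i" using group[OF F spheres(1)] group[OF F' spheres(2)] i0 by blast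
next
  assume "\<exists>i\<in>I. F \<in> Ei i \<and> F' \<in> Ei i"
  then obtain i where i: "i \<in> I" "F \<in> Ei i" "F' \<in> Ei i" by blast
  then have "cverts (edge_sphere N E F) \<subseteq> cluster i" "cverts (edge_sphere N E F') \<subseteq> cluster i"
    using cluster_eq_edge_spheres[OF i(1)] by blast+
  then show "same_component K (edge_sphere N E F) (edge_sphere N E F')"
    unfolding same_component_def components_K using i(1) by blast
qed

end

text \<open>The blocks \<open>{k a + 1 .. k a + a}\<close> for distinct \<open>k\<close> are disjoint, since the
  block of a smaller index ends before the block of a larger one starts.\<close>
lemma consecutive_blocks_disjoint:
  fixes k k' A :: nat
  assumes "k \<noteq> k'"
  shows "{k * A + 1..k * A + A} \<inter> {k' * A + 1..k' * A + A} = {}"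
proof -
  have ends_before: "l * A + A \<le> l' * A" if "l < l'" for l l' :: nat
    using mult_le_mono1[of "Suc l" l' A] that by simp
  from assms consider "k < k'" | "k' < k" by linarith
  then show ?thesis by cases (auto dest: ends_before)
qed

lemma staircase_block_hypergraph:
  fixes m A :: nat and a :: "nat \<Rightarrow> nat" and Ei :: "nat \<Rightarrow> nat set set" and E :: "nat set set"
  assumes A: "3 \<le> A" and a: "\<And>i. i \<in> {1..m} \<Longrightarrow> 1 \<le> a i \<and> a i \<le> A"
  defines "Ei \<equiv> (\<lambda>i. {{1..(m - i) * A} \<union> {(m - i + 1) * A + 1..m * A} \<union> {j} | j.
                      (m - i) * A + 1 \<le> j \<and> j \<le> (m - i) * A + a i})"
    and "E \<equiv> (\<Union>i\<in>{1..m}. Ei i)"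
  shows "block_hypergraph (m * A) {1..m} (\<lambda>i. {(m - i) * A + 1..(m - i) * A + A})
           (\<lambda>i. {(m - i) * A + 1..(m - i) * A + a i}) Ei E"
proof
  fix i assume i: "i \<in> {1..m}"
  have shift: "(m - i + 1) * A = (m - i) * A + A" by simp
  have "(m - i + 1) * A \<le> m * A" using i by (intro mult_le_mono1) auto
  then have top: "(m - i) * A + A \<le> m * A" by (simp add: add.commute)
  show "{(m - i) * A + 1..(m - i) * A + A} \<subseteq> {1..m * A}" using top by auto
  show "3 \<le> card {(m - i) * A + 1..(m - i) * A + A}" using A by simp
  show "{(m - i) * A + 1..(m - i) * A + a i} \<subseteq> {(m - i) * A + 1..(m - i) * A + A}"
    using a[OF i] by auto
  show "{(m - i) * A + 1..(m - i) * A + a i} \<noteq> {}" using a[OF i] by simp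
  have "{1..m * A} - {(m - i) * A + 1..(m - i) * A + A} =
        {1..(m - i) * A} \<union> {(m - i + 1) * A + 1..m * A}"
    unfolding shift using top by auto
  then show "Ei i = (\<lambda>j. insert j ({1..m * A} - {(m - i) * A + 1..(m - i) * A + A})) `
                      {(m - i) * A + 1..(m - i) * A + a i}"
    unfolding Ei_def by auto
next
  fix i i' assume "i \<in> {1..m}" "i' \<in> {1..m}" "i \<noteq> i'"
  then have "m - i \<noteq> m - i'" by auto
  then show "{(m - i) * A + 1..(m - i) * A + A} \<inter> {(m - i') * A + 1..(m - i') * A + A} = {}"
    by (rule consecutive_blocks_disjoint)
qed (simp add: E_def)

theorem mainTheorem15:
  fixes m :: nat and a :: "nat \<Rightarrow> nat" and A :: nat
    and Ei :: "nat \<Rightarrow> nat set set" and E :: "nat set set"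
  assumes "m \<ge> 2"
    and "\<forall>i j. 1 \<le> i \<and> i \<le> j \<and> j \<le> m \<longrightarrow> a j \<le> a i"
    and "a m \<ge> 1"
  defines "A \<equiv> max 3 (a 1)"
    and "Ei \<equiv> (\<lambda>i. {{1..(m - i) * A} \<union> {(m - i + 1) * A + 1..m * A} \<union> {j} | j.
                      (m - i) * A + 1 \<le> j \<and> j \<le> (m - i) * A + a i})"
    and "E \<equiv> (\<Union>i\<in>{1..m}. Ei i)"
  shows "(\<forall>F\<in>E. \<forall>F'\<in>E.
            same_component (coloring_complex (m * A) E)
              (edge_sphere (m * A) E F) (edge_sphere (m * A) E F')
            \<longleftrightarrow> (\<exists>i\<in>{1..m}. F \<in> Ei i \<and> F' \<in> Ei i))
         \<and> card (components (coloring_complex (m * A) E)) = m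
         \<and> (\<forall>i\<in>{1..m}. card (Ei i) = a i \<and>
              (\<Union>F\<in>Ei i. cverts (edge_sphere (m * A) E F))
                \<in> components (coloring_complex (m * A) E))"
proof -
  have a_bounds: "1 \<le> a i \<and> a i \<le> A" if "i \<in> {1..m}" for i
    using assms(2,3) that unfolding A_def by (metis atLeastAtMost_iff le_refl max.coboundedI2 order_trans)
  interpret staircase: block_hypergraph "m * A" "{1..m}" "\<lambda>i. {(m - i) * A + 1..(m - i) * A + A}"
    "\<lambda>i. {(m - i) * A + 1..(m - i) * A + a i}" Ei E
    unfolding Ei_def E_def by (rule staircase_block_hypergraph[OF _ a_bounds]) (simp add: A_def)
  show ?thesis
  proof (intro conjI ballI)
    fix F F' assume "F \<in> E" "F' \<in> E"
    then show "same_component (coloring_complex (m * A) E)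
              (edge_sphere (m * A) E F) (edge_sphere (m * A) E F')
            \<longleftrightarrow> (\<exists>i\<in>{1..m}. F \<in> Ei i \<and> F' \<in> Ei i)"
      by (rule staircase.same_component_iff)
  next
    show "card (components (coloring_complex (m * A) E)) = m"
      using staircase.card_components by simp
  next
    fix i assume i: "i \<in> {1..m}"
    show "card (Ei i) = a i" using staircase.card_Ei[OF i] by simp
    show "(\<Union>F\<in>Ei i. cverts (edge_sphere (m * A) E F)) \<in> components (coloring_complex (m * A) E)"
      using staircase.cluster_eq_edge_spheres[OF i] staircase.components_K i by simp
  qed
qed

end
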